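(* Let $g(x)=\sum_{n\ge 1}\frac{2\,(4n+1)!}{(n+1)!\,(3n+2)!}\,x^n$, regarded as a formal power series. Then $$\lim_{n\to\infty}\frac{[x^n]\,(g(x))^2}{[x^n]\,g(x)}=\frac{10}{27}.$$
   Context: For a formal power series $f(x)$, $[x^n]f(x)$ denotes the coefficient of $x^n$ in $f(x)$. *)

theory Defs
  imports "HOL-Computational_Algebra.Formal_Power_Series"
begin

definition g_fps :: "real fps" where
  "g_fps = Abs_fps (\<lambda>n. if n = 0 then 0
      else 2 * fact (4*n+1) / (fact (n+1) * fact (3*n+2)))"

end

theory Submission
  imports Defs "HOL-Real_Asymp.Real_Asymp"
begin

text \<open>Let \<open>B(x)\<close> be the generalized binomial series, \<open>B = 1 + x B\<^sup>4\<close>. Its real powers have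
  coefficients \<open>[x\<^sup>n] B\<^sup>a = a/(4n+a) \<cdot> binom(4n+a, n)\<close> and satisfy \<open>B\<^sup>a B\<^sup>b = B\<^sup>a\<^sup>+\<^sup>b\<close>
  (Hagen--Rothe convolution). Comparing coefficients gives \<open>x g = 3B\<^sup>-\<^sup>1 - 2B\<^sup>-\<^sup>2 - 1 - x\<close>, so
  \<open>x\<^sup>2 g\<^sup>2\<close> is a combination of \<open>B\<^sup>-\<^sup>1, ..., B\<^sup>-\<^sup>4\<close>, \<open>x B\<^sup>-\<^sup>1\<close>, \<open>x B\<^sup>-\<^sup>2\<close> and a polynomial. At negative
  integers \<open>a\<close> these coefficients are hypergeometric terms of the same kind as \<open>[x\<^sup>n] g\<close>, so
  \<open>[x\<^sup>n] g\<^sup>2 / [x\<^sup>n] g\<close> is eventually a rational function of \<open>n\<close>, with limit \<open>10/27\<close>.\<close>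

text \<open>\<open>gen_binomial_coeff t n x = [z\<^sup>n] B\<^sub>t(z)\<^sup>x = x/(tn+x) \<cdot> binom(tn+x, n)\<close>, where \<open>B\<^sub>t = 1 + z B\<^sub>t\<^sup>t\<close>;
  the product form avoids the division by \<open>tn+x\<close>.\<close>

fun gen_binomial_coeff :: "nat \<Rightarrow> nat \<Rightarrow> real \<Rightarrow> real" where
  "gen_binomial_coeff t 0 x = 1"
| "gen_binomial_coeff t (Suc m) x =
     x * pochhammer (x + (real t - 1) * real m + real t) m / fact (Suc m)"

lemma gen_binomial_coeff_diff:
  "gen_binomial_coeff t (Suc m) x - gen_binomial_coeff t (Suc m) (x - 1) =
   gen_binomial_coeff t m (x + real t - 1)"
proof (cases m)
  case 0
  then show ?thesis by simp
next
  case (Suc k)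
  define a where "a = x + (real t - 1) * real k + 2 * real t - 1"
  have a_x: "x + (real t - 1) * real (Suc k) + real t = a"
    and a_x1: "x - 1 + (real t - 1) * real (Suc k) + real t = a - 1"
    and a_k: "x + real t - 1 + (real t - 1) * real k + real t = a"
    by (simp_all add: a_def algebra_simps)
  have "gen_binomial_coeff t (Suc m) x - gen_binomial_coeff t (Suc m) (x - 1) =
        (x * (a + real k) - (x - 1) * (a - 1)) * pochhammer a k / fact (Suc (Suc k))"
    unfolding Suc gen_binomial_coeff.simps a_x a_x1 pochhammer_rec'[of a k]
    by (simp add: pochhammer_rec diff_divide_distrib[symmetric] algebra_simps)
  also have "\<dots> = (real k + 2) * ((x + real t - 1) * pochhammer a k) / ((real k + 2) * fact (Suc k))"
    by (simp add: a_def algebra_simps)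
  also have "\<dots> = gen_binomial_coeff t m (x + real t - 1)"
    unfolding Suc gen_binomial_coeff.simps a_k by simp
  finally show ?thesis .
qed

lemma gen_binomial_coeff_convolution:
  "(\<Sum>k\<le>n. gen_binomial_coeff t k x * gen_binomial_coeff t (n - k) (of_int j)) =
   gen_binomial_coeff t n (x + of_int j)"
proof (induction n arbitrary: j)
  case 0
  then show ?case by simp
next
  case (Suc n)
  define D where "D y = (\<Sum>k\<le>Suc n. gen_binomial_coeff t k x * gen_binomial_coeff t (Suc n - k) y)
    - gen_binomial_coeff t (Suc n) (x + y)" for y
  have D_diff: "D y - D (y - 1) =
      (\<Sum>k\<le>n. gen_binomial_coeff t k x * gen_binomial_coeff t (n - k) (y + real t - 1))
      - gen_binomial_coeff t n (x + y + real t - 1)" for y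
  proof -
    have split: "(\<Sum>k\<le>Suc n. gen_binomial_coeff t k x * gen_binomial_coeff t (Suc n - k) z) =
        (\<Sum>k\<le>n. gen_binomial_coeff t k x * gen_binomial_coeff t (Suc (n - k)) z)
        + gen_binomial_coeff t (Suc n) x" for z
      by (simp add: Suc_diff_le)
    have "D y - D (y - 1) =
        (\<Sum>k\<le>n. gen_binomial_coeff t k x *
           (gen_binomial_coeff t (Suc (n - k)) y - gen_binomial_coeff t (Suc (n - k)) (y - 1)))
        - (gen_binomial_coeff t (Suc n) (x + y) - gen_binomial_coeff t (Suc n) (x + y - 1))"
      unfolding D_def split
      by (simp add: sum_subtractf right_diff_distrib add_diff_eq del: gen_binomial_coeff.simps)
    then show ?thesis
      by (simp only: gen_binomial_coeff_diff)
  qed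
  have D_step: "D (of_int i) = D (of_int i - 1)" for i
    using D_diff[of "of_int i"] Suc.IH[of "i + int t - 1"] by (simp add: algebra_simps)
  have "D 0 = 0"
    by (simp add: D_def Suc_diff_le)
  have "D (of_int i) = 0" for i
  proof (induction i rule: int_induct[where k = 0])
    case base
    then show ?case using \<open>D 0 = 0\<close> by simp
  next
    case (step1 i)
    then show ?case using D_step[of "i + 1"] by simp
  next
    case (step2 i)
    then show ?case using D_step[of i] by simp
  qed
  then show ?case by (simp add: D_def)
qed

definition gen_binomial_fps :: "nat \<Rightarrow> real \<Rightarrow> real fps" where
  "gen_binomial_fps t x = Abs_fps (\<lambda>n. gen_binomial_coeff t n x)"

lemma fps_nth_gen_binomial_fps [simp]: "fps_nth (gen_binomial_fps t x) n = gen_binomial_coeff t n x"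
  by (simp add: gen_binomial_fps_def)

lemma gen_binomial_fps_mult:
  "gen_binomial_fps t x * gen_binomial_fps t (of_int j) = gen_binomial_fps t (x + of_int j)"
  by (rule fps_ext) (simp add: fps_mult_nth atLeast0AtMost gen_binomial_coeff_convolution)

lemma fact_add_eq_fact_mult_pochhammer:
  "fact (k + j) = (fact k :: 'a :: {comm_semiring_1, semiring_char_0}) * pochhammer (of_nat k + 1) j"
proof -
  have "(fact (k + j) :: 'a) = pochhammer 1 (k + j)"
    by (simp add: pochhammer_fact)
  also have "\<dots> = pochhammer 1 k * pochhammer (of_nat k + 1) j"
    by (simp add: pochhammer_product' add.commute[of 1])
  finally show ?thesis
    by (simp add: pochhammer_fact)
qed

lemma gen_binomial_coeff_minus_of_nat:
  assumes "r \<le> (t - 1) * Suc m"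
  shows "gen_binomial_coeff t (Suc m) (- real r) =
    - real r * fact (t * Suc m - 1 - r) / (fact ((t - 1) * Suc m - r) * fact (Suc m))"
proof (cases "r = 0")
  case True
  then show ?thesis by simp
next
  case False
  with assms obtain u where t: "t = Suc u"
    by (cases t) auto
  define a where "a = u * Suc m - r"
  have "- real r + (real t - 1) * real m + real t = real a + 1"
    using assms by (simp add: a_def t algebra_simps)
  moreover have "t * Suc m - 1 - r = a + m" "(t - 1) * Suc m - r = a"
    using assms by (simp_all add: a_def t)
  ultimately show ?thesis
    by (simp add: fact_add_eq_fact_mult_pochhammer[of a m])
qed

definition gen_binomial_g_ratio :: "nat \<Rightarrow> nat \<Rightarrow> nat \<Rightarrow> real" where
  "gen_binomial_g_ratio s r n =
    - real r * (3 * real n + 2) * pochhammer (4 * real n + 2) (4 * s + 2 - r)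
    / (2 * pochhammer (3 * real n + 2) (3 * s + 2 - r) * pochhammer (real n + 2) s)"

lemma fps_nth_g_fps: "n \<ge> 1 \<Longrightarrow>
  fps_nth g_fps n = 2 * fact (4 * n + 1) / ((3 * real n + 2) * fact (3 * n + 1) * fact (n + 1))"
  by (simp add: g_fps_def fact_reduce[of "3 * n + 2"] algebra_simps)

lemma gen_binomial_coeff_over_g:
  assumes "n \<ge> 1" "r \<le> 3 * s + 2"
  shows "gen_binomial_coeff 4 (n + s + 1) (- real r) / fps_nth g_fps n = gen_binomial_g_ratio s r n"
proof -
  have "4 * Suc (n + s) - 1 - r = (4 * n + 1) + (4 * s + 2 - r)"
    using assms(2) by simp
  then have F1: "(fact (4 * Suc (n + s) - 1 - r) :: real) =
      fact (4 * n + 1) * pochhammer (4 * real n + 2) (4 * s + 2 - r)"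
    by (simp only: fact_add_eq_fact_mult_pochhammer) (simp add: algebra_simps)
  have "(4 - 1) * Suc (n + s) - r = (3 * n + 1) + (3 * s + 2 - r)"
    using assms(2) by simp
  then have F2: "(fact ((4 - 1) * Suc (n + s) - r) :: real) =
      fact (3 * n + 1) * pochhammer (3 * real n + 2) (3 * s + 2 - r)"
    by (simp only: fact_add_eq_fact_mult_pochhammer) (simp add: algebra_simps)
  have "Suc (n + s) = (n + 1) + s"
    by simp
  then have F3: "(fact (Suc (n + s)) :: real) = fact (n + 1) * pochhammer (real n + 2) s"
    by (simp only: fact_add_eq_fact_mult_pochhammer) (simp add: algebra_simps)
  have coeff: "gen_binomial_coeff 4 (n + s + 1) (- real r) =
    - real r * (fact (4 * n + 1) * pochhammer (4 * real n + 2) (4 * s + 2 - r))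
    / ((fact (3 * n + 1) * pochhammer (3 * real n + 2) (3 * s + 2 - r))
       * (fact (n + 1) * pochhammer (real n + 2) s))"
    using gen_binomial_coeff_minus_of_nat[of r 4 "n + s"] assms(2)
    unfolding F1 F2 F3 by simp
  have cancel: "a * (F1 * P1) / ((F2 * P2) * (F3 * P3)) / (2 * F1 / (b * F2 * F3)) =
      a * b * P1 / (2 * P2 * P3)"
    if "F1 \<noteq> 0" "F2 \<noteq> 0" "F3 \<noteq> 0" "b \<noteq> 0" for a b F1 F2 F3 P1 P2 P3 :: real
    using that by (simp add: field_simps)
  show ?thesis
    unfolding coeff fps_nth_g_fps[OF assms(1)] gen_binomial_g_ratio_def
    by (rule cancel) simp_all
qed

lemma fps_X_mult_g_fps:
  "fps_X * g_fps = 3 * gen_binomial_fps 4 (-1) - 2 * gen_binomial_fps 4 (-2) - 1 - fps_X"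
proof (rule fps_ext)
  fix n :: nat
  consider "n = 0" | "n = 1" | m where "n = m + 1" "m \<ge> 1"
    by atomize_elim arith
  then show "fps_nth (fps_X * g_fps) n =
    fps_nth (3 * gen_binomial_fps 4 (-1) - 2 * gen_binomial_fps 4 (-2) - 1 - fps_X) n"
  proof cases
    case 3
    have "fps_nth g_fps m \<noteq> 0"
      using \<open>m \<ge> 1\<close> by (simp add: fps_nth_g_fps)
    then have c: "gen_binomial_coeff 4 (m + 1) (-1) = gen_binomial_g_ratio 0 1 m * fps_nth g_fps m"
      "gen_binomial_coeff 4 (m + 1) (-2) = gen_binomial_g_ratio 0 2 m * fps_nth g_fps m"
      using gen_binomial_coeff_over_g[of m 1 0] gen_binomial_coeff_over_g[of m 2 0] \<open>m \<ge> 1\<close>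
      by (simp_all add: divide_eq_eq del: gen_binomial_coeff.simps)
    have "fps_nth (3 * gen_binomial_fps 4 (-1) - 2 * gen_binomial_fps 4 (-2) - 1 - fps_X) n =
        3 * gen_binomial_coeff 4 (m + 1) (-1) - 2 * gen_binomial_coeff 4 (m + 1) (-2)"
      using 3 by (simp add: fps_numeral_fps_const del: gen_binomial_coeff.simps)
    also have "\<dots> = (3 * gen_binomial_g_ratio 0 1 m - 2 * gen_binomial_g_ratio 0 2 m) * fps_nth g_fps m"
      unfolding c by (simp only: left_diff_distrib mult.assoc)
    also have "3 * gen_binomial_g_ratio 0 1 m - 2 * gen_binomial_g_ratio 0 2 m = 1"
      by (simp add: gen_binomial_g_ratio_def field_simps)
    finally show ?thesis
      using 3 by simp
  qed (simp_all add: g_fps_def fps_numeral_fps_const)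
qed

lemma fps_X_power2_mult_g_fps_power2:
  defines "B \<equiv> \<lambda>r. gen_binomial_fps 4 (- of_nat r)"
  shows "fps_X^2 * g_fps^2 = 13 * B 2 + 4 * B 4 - 12 * B 3 - 6 * B 1
    - 6 * fps_X * B 1 + 4 * fps_X * B 2 + 1 + 2 * fps_X + fps_X^2"
proof -
  have "B 1 * B 1 = B 2" "B 1 * B 2 = B 3" "B 2 * B 2 = B 4"
    unfolding B_def using gen_binomial_fps_mult[of 4 "- 1" "- 1"]
      gen_binomial_fps_mult[of 4 "- 1" "- 2"] gen_binomial_fps_mult[of 4 "- 2" "- 2"]
    by simp_all
  moreover have "fps_X^2 * g_fps^2 = (3 * B 1 - 2 * B 2 - 1 - fps_X)^2"
    by (simp add: B_def fps_X_mult_g_fps power_mult_distrib[symmetric])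
  ultimately show ?thesis
    by (simp add: power2_eq_square algebra_simps)
qed

lemma fps_nth_g_fps_power2:
  assumes "n \<ge> 1"
  shows "fps_nth (g_fps^2) n =
    13 * gen_binomial_coeff 4 (n + 2) (-2) + 4 * gen_binomial_coeff 4 (n + 2) (-4)
    - 12 * gen_binomial_coeff 4 (n + 2) (-3) - 6 * gen_binomial_coeff 4 (n + 2) (-1)
    - 6 * gen_binomial_coeff 4 (n + 1) (-1) + 4 * gen_binomial_coeff 4 (n + 1) (-2)"
proof -
  have "fps_nth (g_fps^2) n = fps_nth (fps_X^2 * g_fps^2) (n + 2)"
    by (simp add: fps_X_power_mult_nth)
  then show ?thesis
    unfolding fps_X_power2_mult_g_fps_power2 using assms
    by (simp add: fps_numeral_fps_const mult.assoc)
qed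

text \<open>Each summand grows linearly in \<open>n\<close>; only the combination converges.\<close>

lemma gen_binomial_g_ratio_combination_limit:
  "(\<lambda>n. 13 * gen_binomial_g_ratio 1 2 n + 4 * gen_binomial_g_ratio 1 4 n
      - 12 * gen_binomial_g_ratio 1 3 n - 6 * gen_binomial_g_ratio 1 1 n
      - 6 * gen_binomial_g_ratio 0 1 n + 4 * gen_binomial_g_ratio 0 2 n) \<longlonglongrightarrow> 10 / 27"
  unfolding gen_binomial_g_ratio_def by (simp add: pochhammer_Suc eval_nat_numeral) real_asymp

theorem mainTheorem1:
  shows "(\<lambda>n. fps_nth (g_fps ^ 2) n / fps_nth g_fps n) \<longlonglongrightarrow> 10 / 27"
proof (rule Lim_transform_eventually[OF gen_binomial_g_ratio_combination_limit])
  show "\<forall>\<^sub>F n in sequentially.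
    13 * gen_binomial_g_ratio 1 2 n + 4 * gen_binomial_g_ratio 1 4 n
      - 12 * gen_binomial_g_ratio 1 3 n - 6 * gen_binomial_g_ratio 1 1 n
      - 6 * gen_binomial_g_ratio 0 1 n + 4 * gen_binomial_g_ratio 0 2 n
    = fps_nth (g_fps ^ 2) n / fps_nth g_fps n"
    using eventually_ge_at_top[of 1]
  proof eventually_elim
    case (elim n)
    then show ?case
      using gen_binomial_coeff_over_g[of n 2 1] gen_binomial_coeff_over_g[of n 4 1]
        gen_binomial_coeff_over_g[of n 3 1] gen_binomial_coeff_over_g[of n 1 1]
        gen_binomial_coeff_over_g[of n 1 0] gen_binomial_coeff_over_g[of n 2 0]
      by (simp add: fps_nth_g_fps_power2 diff_divide_distrib add_divide_distrib)
  qed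
qed

end
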